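(* If $D$ is a maximum independent set in a simple graph $G$, then $G$ has a matching that covers every vertex of $V(G)-D$. *)

theory Defs
  imports Main
begin

definition simple_graph :: "'a set \<Rightarrow> ('a \<Rightarrow> 'a \<Rightarrow> bool) \<Rightarrow> bool" where
  "simple_graph V E \<longleftrightarrow> finite V \<and> (\<forall>u v. E u v \<longrightarrow> u \<in> V \<and> v \<in> V)
     \<and> (\<forall>u v. E u v \<longrightarrow> E v u) \<and> (\<forall>v. \<not> E v v)"

definition independent_set :: "'a set \<Rightarrow> ('a \<Rightarrow> 'a \<Rightarrow> bool) \<Rightarrow> 'a set \<Rightarrow> bool" where
  "independent_set V E D \<longleftrightarrow> D \<subseteq> V \<and> (\<forall>u\<in>D. \<forall>v\<in>D. \<not> E u v)"

definition maximum_independent_set :: "'a set \<Rightarrow> ('a \<Rightarrow> 'a \<Rightarrow> bool) \<Rightarrow> 'a set \<Rightarrow> bool" where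
  "maximum_independent_set V E D \<longleftrightarrow> independent_set V E D
     \<and> (\<forall>D'. independent_set V E D' \<longrightarrow> card D' \<le> card D)"

definition edges :: "('a \<Rightarrow> 'a \<Rightarrow> bool) \<Rightarrow> 'a set set" where
  "edges E = {{u, v} | u v. E u v}"

definition matching :: "('a \<Rightarrow> 'a \<Rightarrow> bool) \<Rightarrow> 'a set set \<Rightarrow> bool" where
  "matching E M \<longleftrightarrow> M \<subseteq> edges E \<and> (\<forall>e1\<in>M. \<forall>e2\<in>M. e1 \<noteq> e2 \<longrightarrow> e1 \<inter> e2 = {})"

definition covers :: "'a set set \<Rightarrow> 'a set \<Rightarrow> bool" where
  "covers M S \<longleftrightarrow> S \<subseteq> \<Union> M"

end

theory Submission
  imports Defs
begin

text \<open>Greedily match edges inside \<open>V - D\<close> until the unmatched vertices \<open>U\<close> of \<open>V - D\<close>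
  form an independent set. For \<open>X \<subseteq> U\<close>, the set \<open>X\<close> together with the vertices of \<open>D\<close>
  having no neighbour in \<open>X\<close> is independent, so maximality of \<open>D\<close> bounds \<open>|X|\<close> by the
  number of neighbours of \<open>X\<close> in \<open>D\<close>. This is Hall's condition, and Hall's marriage
  theorem matches \<open>U\<close> into \<open>D\<close>.\<close>

definition hall_condition :: "'a set \<Rightarrow> ('a \<Rightarrow> 'b set) \<Rightarrow> bool" where
  "hall_condition A S \<longleftrightarrow> (\<forall>X\<subseteq>A. card X \<le> card (\<Union>(S ` X)))"

lemma hall_condition_subset: "hall_condition A S \<Longrightarrow> B \<subseteq> A \<Longrightarrow> hall_condition B S"
  unfolding hall_condition_def by blast

lemma hall_condition_Diff_tight:
  assumes hall: "hall_condition A S" and "finite A" and fin: "\<forall>a\<in>A. finite (S a)"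
    and X: "X \<subseteq> A" "card (\<Union>(S ` X)) \<le> card X"
  shows "hall_condition (A - X) (\<lambda>a. S a - \<Union>(S ` X))"
  unfolding hall_condition_def
proof (intro allI impI)
  fix Y assume Y: "Y \<subseteq> A - X"
  let ?rest = "\<Union>a\<in>Y. S a - \<Union>(S ` X)"
  have finN: "finite (\<Union>(S ` Z))" if "Z \<subseteq> A" for Z
    using that fin \<open>finite A\<close> by (simp add: finite_subset subset_iff)
  have "card X + card Y = card (X \<union> Y)"
  proof (rule card_Un_disjoint[symmetric])
    show "finite X" using X(1) \<open>finite A\<close> by (rule finite_subset)
    show "finite Y" using Y \<open>finite A\<close> by (rule finite_subset[OF _ finite_Diff])
  qed (use Y in blast)
  also have "\<dots> \<le> card (\<Union>(S ` (X \<union> Y)))"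
    using hall X(1) Y unfolding hall_condition_def by (metis Diff_subset Un_least subset_trans)
  also have "\<Union>(S ` (X \<union> Y)) = \<Union>(S ` X) \<union> ?rest" by blast
  also have "card \<dots> = card (\<Union>(S ` X)) + card ?rest"
  proof (rule card_Un_disjoint)
    show "finite (\<Union>(S ` X))" using finN X(1) .
    show "finite ?rest" using finN[of Y] Y by (auto intro: finite_subset)
  qed blast
  finally show "card Y \<le> card ?rest" using X(2) by linarith
qed

lemma hall_condition_Diff_surplus:
  assumes "a \<in> A" and surplus: "\<forall>X. X \<noteq> {} \<longrightarrow> X \<subset> A \<longrightarrow> card X < card (\<Union>(S ` X))"
  shows "hall_condition (A - {a}) (\<lambda>x. S x - {b})"
  unfolding hall_condition_def
proof (intro allI impI)
  fix Y assume Y: "Y \<subseteq> A - {a}"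
  show "card Y \<le> card (\<Union>x\<in>Y. S x - {b})"
  proof (cases "Y = {}")
    case False
    have "Y \<subset> A" using Y \<open>a \<in> A\<close> by blast
    then have "card Y < card (\<Union>(S ` Y))" using surplus False by simp
    moreover have "\<Union>(S ` Y) - {b} = (\<Union>x\<in>Y. S x - {b})" by blast
    then have "card (\<Union>(S ` Y)) - 1 \<le> card (\<Union>x\<in>Y. S x - {b})"
      using diff_card_le_card_Diff[of "{b}" "\<Union>(S ` Y)"] by simp
    ultimately show ?thesis by linarith
  qed simp
qed

theorem Hall_marriage:
  assumes "finite A" and "\<forall>a\<in>A. finite (S a)" and "hall_condition A S"
  shows "\<exists>f. inj_on f A \<and> (\<forall>a\<in>A. f a \<in> S a)"
  using assms
proof (induction "card A" arbitrary: A S rule: less_induct)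
  case less
  note finA = less.prems(1) and finS = less.prems(2) and hall = less.prems(3)
  show ?case
  proof (cases "\<exists>X. X \<noteq> {} \<and> X \<subset> A \<and> card (\<Union>(S ` X)) \<le> card X")
    case True
    then obtain X where X: "X \<noteq> {}" "X \<subset> A" "card (\<Union>(S ` X)) \<le> card X" by blast
    have "finite X" "finite (A - X)" using X(2) finA by (auto dest: rev_finite_subset)
    moreover have "card X < card A" "card (A - X) < card A"
      using X(1,2) finA by (auto intro: psubset_card_mono)
    moreover have "\<forall>a\<in>X. finite (S a)" "\<forall>a\<in>A - X. finite (S a - \<Union>(S ` X))"
      using finS X(2) by auto
    moreover have "hall_condition X S" "hall_condition (A - X) (\<lambda>a. S a - \<Union>(S ` X))"
      using hall X(2,3) by (auto intro: hall_condition_subset hall_condition_Diff_tight[OF hall finA finS])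
    ultimately obtain g h where
      g: "inj_on g X" "\<forall>a\<in>X. g a \<in> S a" and
      h: "inj_on h (A - X)" "\<forall>a\<in>A - X. h a \<in> S a - \<Union>(S ` X)"
      by (metis less.hyps)
    have "g x \<noteq> h y" if "x \<in> X" "y \<in> A - X" for x y
      using g(2)[rule_format, OF that(1)] h(2)[rule_format, OF that(2)] that(1) by auto
    then have "inj_on (\<lambda>a. if a \<in> X then g a else h a) A"
      using g(1) h(1) unfolding inj_on_def by (metis Diff_iff)
    then show ?thesis using g h by (intro exI[of _ "\<lambda>a. if a \<in> X then g a else h a"]) auto
  next
    case False
    then have surplus: "\<forall>X. X \<noteq> {} \<longrightarrow> X \<subset> A \<longrightarrow> card X < card (\<Union>(S ` X))"
      by (auto simp: not_le)
    show ?thesis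
    proof (cases "A = {}")
      case False
      then obtain a where a: "a \<in> A" by blast
      have "card {a} \<le> card (\<Union>(S ` {a}))"
        using a by (intro hall[unfolded hall_condition_def, rule_format]) simp
      then obtain b where b: "b \<in> S a" by fastforce
      have "card (A - {a}) < card A" using finA a by (rule card_Diff1_less)
      then obtain h where h: "inj_on h (A - {a})" "\<forall>x\<in>A - {a}. h x \<in> S x - {b}"
        using less.hyps[OF _ _ _ hall_condition_Diff_surplus[OF a surplus]] finA finS by blast
      have "inj_on (h(a := b)) A" using h a unfolding inj_on_def by auto
      then show ?thesis using h b by (intro exI[of _ "h(a := b)"]) auto
    qed simp
  qed
qed

lemma matching_Un:
  assumes "matching E M" "matching E N" "\<Union>M \<inter> \<Union>N = {}"
  shows "matching E (M \<union> N)"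
proof -
  have "e \<inter> e' = {}" if "e \<in> M" "e' \<in> N" for e e'
    using that assms(3) by blast
  with assms(1,2) show ?thesis
    unfolding matching_def by (metis Int_commute Un_iff Un_least)
qed

lemma matching_graph_of_injection:
  assumes "inj_on f U" "\<forall>u\<in>U. E u (f u)" "f ` U \<inter> U = {}"
  shows "matching E ((\<lambda>u. {u, f u}) ` U)"
  using assms unfolding matching_def edges_def inj_on_def by blast

lemma matching_with_independent_remainder:
  assumes "finite A"
  shows "\<exists>M. matching E M \<and> \<Union>M \<subseteq> A \<and> (\<forall>u\<in>A - \<Union>M. \<forall>v\<in>A - \<Union>M. \<not> E u v)"
  using assms
proof (induction "card A" arbitrary: A rule: less_induct)
  case less
  show ?case
  proof (cases "\<exists>u\<in>A. \<exists>v\<in>A. E u v")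
    case True
    then obtain u v where uv: "u \<in> A" "v \<in> A" "E u v" by blast
    have "card (A - {u, v}) < card A"
      using uv less.prems by (intro psubset_card_mono) auto
    then obtain M where M: "matching E M" "\<Union>M \<subseteq> A - {u, v}"
        "\<forall>x\<in>A - {u, v} - \<Union>M. \<forall>y\<in>A - {u, v} - \<Union>M. \<not> E x y"
      using less.hyps[OF _ finite_Diff[OF less.prems]] by meson
    have "matching E (M \<union> {{u, v}})"
      using M uv by (intro matching_Un) (auto simp: matching_def edges_def)
    then show ?thesis using M uv by (intro exI[of _ "M \<union> {{u, v}}"]) auto
  qed (auto intro: exI[of _ "{}"] simp: matching_def)
qed

lemma hall_condition_neighbours_in_maximum_independent_set:
  assumes G: "simple_graph V E" and D: "maximum_independent_set V E D"
    and U: "U \<subseteq> V - D" "\<forall>u\<in>U. \<forall>v\<in>U. \<not> E u v"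
  shows "hall_condition U (\<lambda>u. {d \<in> D. E u d})"
  unfolding hall_condition_def
proof (intro allI impI)
  fix X assume X: "X \<subseteq> U"
  let ?N = "\<Union>x\<in>X. {d \<in> D. E x d}"
  have finV: "finite V" and sym: "\<And>u v. E u v \<Longrightarrow> E v u"
    using G unfolding simple_graph_def by blast+
  have DV: "D \<subseteq> V" and Dind: "independent_set V E D"
    using D unfolding maximum_independent_set_def independent_set_def by blast+
  have finD: "finite D" using finite_subset[OF DV finV] .
  have "independent_set V E (X \<union> (D - ?N))"
    using Dind X U sym unfolding independent_set_def by blast
  then have "card (X \<union> (D - ?N)) \<le> card D"
    using D unfolding maximum_independent_set_def by blast
  moreover have "card (X \<union> (D - ?N)) = card X + (card D - card ?N)"
    using X U finD finV by (subst card_Un_disjoint) (auto intro: finite_subset card_Diff_subset)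
  moreover have "card ?N \<le> card D" using finD by (intro card_mono) auto
  ultimately show "card X \<le> card ?N" by linarith
qed

theorem mainTheorem10:
  fixes V :: "'a set" and E :: "'a \<Rightarrow> 'a \<Rightarrow> bool" and D :: "'a set"
  assumes "simple_graph V E"
    and "maximum_independent_set V E D"
  shows "\<exists>M. matching E M \<and> covers M (V - D)"
proof -
  have finV: "finite V" using assms(1) unfolding simple_graph_def by simp
  have finD: "finite D"
    using assms(2) finV unfolding maximum_independent_set_def independent_set_def
    by (auto dest: rev_finite_subset)
  obtain M where M: "matching E M" "\<Union>M \<subseteq> V - D"
    and rest_independent: "\<forall>u\<in>V - D - \<Union>M. \<forall>v\<in>V - D - \<Union>M. \<not> E u v"
    using matching_with_independent_remainder[of "V - D" E] finV by blast
  define U where "U = V - D - \<Union>M"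
  have "finite U" using finV unfolding U_def by simp
  moreover have "\<forall>u\<in>U. finite {d \<in> D. E u d}" using finD by simp
  moreover have "hall_condition U (\<lambda>u. {d \<in> D. E u d})"
    using assms rest_independent unfolding U_def
    by (intro hall_condition_neighbours_in_maximum_independent_set) auto
  ultimately have "\<exists>f. inj_on f U \<and> (\<forall>u\<in>U. f u \<in> {d \<in> D. E u d})"
    by (rule Hall_marriage)
  then obtain f where f: "inj_on f U" "\<forall>u\<in>U. f u \<in> {d \<in> D. E u d}" by (elim exE conjE)
  let ?N = "(\<lambda>u. {u, f u}) ` U"
  have "matching E ?N"
    using f by (intro matching_graph_of_injection) (auto simp: U_def)
  moreover have "\<Union>M \<inter> \<Union>?N = {}" using M(2) f(2) unfolding U_def by auto
  ultimately have "matching E (M \<union> ?N)" using M(1) by (intro matching_Un)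
  moreover have "covers (M \<union> ?N) (V - D)" unfolding covers_def U_def by blast
  ultimately show ?thesis by blast
qed

end
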